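(* For any $n\in\mathbb{N}$ with $n\geq2$, the language $({}_1L)\delta_R=\{(u,v)\delta_R: u,v\in L,\ 1u\equiv_{\mathrm{rps}_n}v\}$ is not regular, where $L=\bigcup_{B\subseteq\mathcal{A}_n}L^B$, with $L^\emptyset=\{\varepsilon\}$, $L^B=L^{(a_1)}\cdots L^{(a_k)}$ for $B=\{a_1<\cdots<a_k\}\neq\emptyset$, and $L^{(j)}=\{n\}^*\{n-1\}^*\cdots\{j+1\}^*\{j\}^+$ for $j\in\mathcal{A}_n$.
   Context: Let $\mathcal{A}_n=\{1<2<\cdots<n\}$. An rPS tableau is a finite (possibly empty) sequence of nonempty bottom-justified columns of boxes filled with positive integers, such that the entries of each column are weakly decreasing from top to bottom and the bottom entries of the columns form a strictly increasing sequence from left to right. Right insertion of a symbol $a$ into an rPS tableau $B$: if $a$ is strictly greater than every entry of the bottom row, append a new column consisting of $a$ at the right end; otherwise, let $z$ be the leftmost bottom-row entry with $z\geq a$ and put $a$ in a new box at the bottom of the column of $z$ (the previous entries of that column move up one box). For $w=w_1\cdots w_k$, $\mathfrak{R}_r(w)$ is obtained by starting with the empty tableau and right-inserting $w_1,\dots,w_k$ in order. $u\equiv_{\mathrm{rps}_n}v$ means $\mathfrak{R}_r(u)=\mathfrak{R}_r(v)$ for $u,v\in\mathcal{A}_n^*$. For the padding symbol $\$\notin\mathcal{A}_n$, $\delta_R:\mathcal{A}_n^*\times\mathcal{A}_n^*\to((\mathcal{A}_n\cup\{\$\})\times(\mathcal{A}_n\cup\{\$\}))^*$ sends $(u_1\cdots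 u_m,v_1\cdots v_p)$ to the word of pairs $(u_i,v_i)$ obtained after padding the shorter word on the right with $\$$'s to equal length. *)

theory Defs
  imports Main
begin

text \<open>An rPS tableau is represented as the list of its columns from left to right;
  each column is a nonempty list of its entries listed from the BOTTOM upwards,
  so the head of a column is its bottom-row entry.\<close>

fun rps_insert :: "nat list list \<Rightarrow> nat \<Rightarrow> nat list list" where
  "rps_insert [] a = [[a]]"
| "rps_insert (c # cs) a =
     (if a \<le> hd c then (a # c) # cs else c # rps_insert cs a)"

definition rps_read :: "nat list \<Rightarrow> nat list list" where
  "rps_read w = foldl rps_insert [] w"

definition rps_equiv :: "nat list \<Rightarrow> nat list \<Rightarrow> bool" where
  "rps_equiv u v \<longleftrightarrow> rps_read u = rps_read v"

text \<open>Padded pairing; the padding symbol \$ is None.\<close>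
definition delta_R :: "nat list \<Rightarrow> nat list \<Rightarrow> (nat option \<times> nat option) list" where
  "delta_R u v = zip (map Some u @ replicate (length v - length u) None)
                     (map Some v @ replicate (length u - length v) None)"

definition lang_concat :: "'a list set \<Rightarrow> 'a list set \<Rightarrow> 'a list set" where
  "lang_concat A B = {u @ v | u v. u \<in> A \<and> v \<in> B}"

definition Lj :: "nat \<Rightarrow> nat \<Rightarrow> nat list set" where
  "Lj n j = {concat (map (\<lambda>i. replicate (k i) i) (rev [j..<Suc n])) | k. k j \<ge> 1}"

definition LB :: "nat \<Rightarrow> nat set \<Rightarrow> nat list set" where
  "LB n B = foldr (\<lambda>a acc. lang_concat (Lj n a) acc) (sorted_list_of_set B) {[]}"

definition Lang :: "nat \<Rightarrow> nat list set" where
  "Lang n = (\<Union>B \<in> Pow {1..n}. LB n B)"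

definition Lang_1L :: "nat \<Rightarrow> (nat option \<times> nat option) list set" where
  "Lang_1L n = {delta_R u v | u v. u \<in> Lang n \<and> v \<in> Lang n \<and> rps_equiv (1 # u) v}"

definition pair_alphabet :: "nat \<Rightarrow> (nat option \<times> nat option) set" where
  "pair_alphabet n = insert None (Some ` {1..n}) \<times> insert None (Some ` {1..n})"

definition regular_over :: "'a set \<Rightarrow> 'a list set \<Rightarrow> bool" where
  "regular_over Alph L \<longleftrightarrow>
     (\<exists>(Q :: nat set) q0 (d :: nat \<Rightarrow> 'a \<Rightarrow> nat) F.
        finite Q \<and> q0 \<in> Q \<and> (\<forall>q\<in>Q. \<forall>a\<in>Alph. d q a \<in> Q) \<and> F \<subseteq> Q \<and>
        L = {w \<in> lists Alph. foldl d q0 w \<in> F})"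

end

theory Submission
  imports Defs "HOL-Library.Multiset"
begin

text \<open>The prefixes \<open>(2,1)\<^sup>j\<close> are pairwise inequivalent for the Nerode relation of
  \<open>(\<^sub>1L)\<delta>\<^sub>R\<close>: with \<open>u = 2\<^sup>j 1\<^sup>i\<close> and \<open>v = 1\<^sup>j\<^sup>+\<^sup>1 2\<^sup>i\<close> both words lie in \<open>L\<close>, and
  \<open>(u,v)\<delta>\<^sub>R = (2,1)\<^sup>j \<cdot> (1\<^sup>i, 1 2\<^sup>i)\<delta>\<^sub>R\<close>.  Right insertion preserves the multiset of
  letters, so \<open>1u \<equiv> v\<close> forces \<open>i = j\<close> by counting 2s, while for \<open>i = j\<close> both
  words read to the tableau with columns \<open>1\<^sup>i\<^sup>+\<^sup>1\<close> and \<open>2\<^sup>i\<close>.  A language with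
  infinitely many Nerode classes is not regular.\<close>

lemma regular_over_Nerode_collision:
  assumes "regular_over A L" and "infinite I" and "\<And>i. i \<in> I \<Longrightarrow> x i \<in> lists A"
  obtains i j where "i \<in> I" "j \<in> I" "i \<noteq> j" "\<And>y. x i @ y \<in> L \<longleftrightarrow> x j @ y \<in> L"
proof -
  obtain Q q0 d F where "finite (Q :: nat set)" "q0 \<in> Q" and d: "\<forall>q\<in>Q. \<forall>a\<in>A. d q a \<in> Q"
    and L: "L = {w \<in> lists A. foldl d q0 w \<in> F}"
    using assms(1) unfolding regular_over_def by blast
  define state where "state i = foldl d q0 (x i)" for i
  have "foldl d q w \<in> Q" if "q \<in> Q" "w \<in> lists A" for q w
    using that d by (induction w arbitrary: q) auto
  then have "state ` I \<subseteq> Q"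
    using \<open>q0 \<in> Q\<close> assms(3) unfolding state_def by blast
  then have "\<not> inj_on state I"
    using \<open>finite Q\<close> assms(2) finite_imageD finite_subset by blast
  then obtain i j where ij: "i \<in> I" "j \<in> I" "i \<noteq> j" "state i = state j"
    unfolding inj_on_def by blast
  have "x i @ y \<in> L \<longleftrightarrow> x j @ y \<in> L" for y
    using ij(1,2,4) assms(3) unfolding L state_def by auto
  with ij(1-3) show thesis by (rule that)
qed

lemma mset_concat_rps_insert:
  "mset (concat (rps_insert T a)) = add_mset a (mset (concat T))"
  by (induction T a rule: rps_insert.induct) auto

lemma mset_concat_rps_read: "mset (concat (rps_read w)) = mset w"
proof -
  have "mset (concat (foldl rps_insert T w)) = mset (concat T) + mset w" for T
    by (induction w arbitrary: T) (auto simp: mset_concat_rps_insert)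
  then show ?thesis by (simp add: rps_read_def)
qed

lemma rps_equiv_imp_mset_eq: "rps_equiv u v \<Longrightarrow> mset u = mset v"
  by (metis mset_concat_rps_read rps_equiv_def)

lemma rps_read_append: "rps_read (u @ v) = foldl rps_insert (rps_read u) v"
  by (simp add: rps_read_def)

lemma foldl_rps_insert_replicate_first_column:
  "a \<le> hd c \<Longrightarrow> foldl rps_insert (c # cs) (replicate k a) = (replicate k a @ c) # cs"
  by (induction k arbitrary: c) (auto simp: replicate_app_Cons_same)

lemma foldl_rps_insert_skip_first_column:
  "\<forall>a\<in>set w. hd c < a \<Longrightarrow> foldl rps_insert (c # cs) w = c # foldl rps_insert cs w"
  by (induction w arbitrary: cs) auto

lemma rps_read_replicate:
  "rps_read (replicate (Suc k) a) = [replicate (Suc k) a]"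
  using foldl_rps_insert_replicate_first_column[of a "[a]" "[]" k]
  by (simp add: rps_read_def replicate_append_same)

lemma rps_read_two_blocks:
  assumes "a < b"
  shows "rps_read (replicate (Suc k) a @ replicate (Suc m) b)
    = [replicate (Suc k) a, replicate (Suc m) b]"
proof -
  have "rps_read (replicate (Suc k) a @ replicate (Suc m) b)
      = foldl rps_insert [replicate (Suc k) a, [b]] (replicate m b)"
    using assms by (simp add: rps_read_append rps_read_replicate del: replicate_Suc)
      (simp add: replicate_Suc)
  also have "\<dots> = replicate (Suc k) a # foldl rps_insert [[b]] (replicate m b)"
    using assms by (intro foldl_rps_insert_skip_first_column) simp
  also have "\<dots> = [replicate (Suc k) a, replicate (Suc m) b]"
    using foldl_rps_insert_replicate_first_column[of b "[b]" "[]" m]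
    by (simp add: replicate_append_same)
  finally show ?thesis .
qed

lemma rps_equiv_separating:
  "rps_equiv (1 # replicate j 2 @ replicate i 1) (replicate (Suc j) 1 @ replicate i 2) \<longleftrightarrow> i = j"
proof
  assume "rps_equiv (1 # replicate j 2 @ replicate i 1) (replicate (Suc j) 1 @ replicate i 2)"
  then have "count (mset (1 # replicate j 2 @ replicate i (1::nat))) 2
      = count (mset (replicate (Suc j) 1 @ replicate i 2)) (2::nat)"
    by (simp only: rps_equiv_imp_mset_eq)
  then show "i = j" by simp
next
  assume "i = j"
  show "rps_equiv (1 # replicate j 2 @ replicate i 1) (replicate (Suc j) 1 @ replicate i 2)"
  proof (cases j)
    case (Suc m)
    have "rps_read (1 # replicate j 2) = [[1], replicate j 2]"
      using Suc rps_read_two_blocks[of 1 2 0 m] by simp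
    then have "rps_read (1 # replicate j 2 @ replicate i 1)
        = foldl rps_insert [[1], replicate j 2] (replicate j 1)"
      using \<open>i = j\<close> rps_read_append[of "1 # replicate j 2" "replicate j 1"] by simp
    also have "\<dots> = [replicate (Suc j) 1, replicate j 2]"
      using foldl_rps_insert_replicate_first_column[of 1 "[1]" _ j]
      by (simp add: replicate_append_same)
    also have "\<dots> = rps_read (replicate (Suc j) 1 @ replicate i 2)"
      using Suc \<open>i = j\<close> rps_read_two_blocks[of 1 2 j m] by simp
    finally show ?thesis unfolding rps_equiv_def .
  qed (use \<open>i = j\<close> in \<open>simp add: rps_equiv_def\<close>)
qed

lemma delta_R_Cons: "delta_R (a # u) (b # v) = (Some a, Some b) # delta_R u v"
  by (simp add: delta_R_def)

lemma delta_R_replicate_append: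
  "delta_R (replicate k a @ u) (replicate k b @ v) = replicate k (Some a, Some b) @ delta_R u v"
  by (induction k) (simp_all add: delta_R_Cons)

lemma delta_R_inj:
  assumes "delta_R u v = delta_R u' v'"
  shows "u = u' \<and> v = v'"
proof -
  have fst: "u = map the (takeWhile (\<lambda>x. x \<noteq> None) (map fst (delta_R u v)))"
    and snd: "v = map the (takeWhile (\<lambda>x. x \<noteq> None) (map snd (delta_R u v)))" for u v
    by (simp_all add: delta_R_def takeWhile_append comp_def)
  show ?thesis
    using assms by (metis fst snd)
qed

lemma delta_R_in_Lang_1L_iff:
  "delta_R u v \<in> Lang_1L n \<longleftrightarrow> u \<in> Lang n \<and> v \<in> Lang n \<and> rps_equiv (1 # u) v"
  unfolding Lang_1L_def by (blast dest: delta_R_inj)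

lemma concat_map_replicate_filter:
  assumes "\<And>x. x \<in> set xs \<Longrightarrow> \<not> P x \<Longrightarrow> k x = 0"
  shows "concat (map (\<lambda>x. replicate (k x) x) xs) = concat (map (\<lambda>x. replicate (k x) x) (filter P xs))"
  using assms by (induction xs) auto

lemma replicate_in_Lj:
  assumes "j \<le> n" "0 < a"
  shows "replicate a j \<in> Lj n j"
proof -
  let ?k = "\<lambda>x. if x = j then a else 0"
  have "filter (\<lambda>x. x = j) (rev [j..<Suc n]) = [j]"
    using assms(1) by (simp add: rev_filter[symmetric] upt_conv_Cons)
  then have "concat (map (\<lambda>x. replicate (?k x) x) (rev [j..<Suc n])) = replicate a j"
    using concat_map_replicate_filter[of "rev [j..<Suc n]" "\<lambda>x. x = j" ?k] by simp
  then show ?thesis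
    unfolding Lj_def using assms(2) by (intro CollectI exI[of _ ?k]) auto
qed

lemma replicate_append_replicate_in_Lj:
  assumes "j < i" "i \<le> n" "0 < a"
  shows "replicate b i @ replicate a j \<in> Lj n j"
proof -
  let ?k = "\<lambda>x. if x = j then a else if x = i then b else 0"
  have "[j..<Suc n] = [j..<i] @ [i..<Suc n]"
    using assms upt_add_eq_append[of j i "Suc n - i"] by (simp del: upt_Suc)
  also have "\<dots> = j # [Suc j..<i] @ i # [Suc i..<Suc n]"
    using assms by (simp add: upt_conv_Cons)
  finally have "filter (\<lambda>x. x = i \<or> x = j) (rev [j..<Suc n]) = [i, j]"
    using assms by (simp add: rev_filter[symmetric] filter_empty_conv del: upt_Suc)
  then have "concat (map (\<lambda>x. replicate (?k x) x) (rev [j..<Suc n])) = replicate b i @ replicate a j"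
    using assms(1) concat_map_replicate_filter[of "rev [j..<Suc n]" "\<lambda>x. x = i \<or> x = j" ?k] by simp
  then show ?thesis
    unfolding Lj_def using assms(3) by (intro CollectI exI[of _ ?k]) auto
qed

lemma Lj_subset_Lang:
  assumes "1 \<le> j" "j \<le> n"
  shows "Lj n j \<subseteq> Lang n"
proof -
  have "LB n {j} = Lj n j"
    by (simp add: LB_def lang_concat_def)
  moreover have "{j} \<in> Pow {1..n}" using assms by simp
  ultimately show ?thesis
    unfolding Lang_def by (metis UN_upper)
qed

lemma lang_concat_Lj_subset_Lang:
  assumes "1 \<le> i" "i < j" "j \<le> n"
  shows "lang_concat (Lj n i) (Lj n j) \<subseteq> Lang n"
proof -
  have "sorted_list_of_set {i, j} = [i, j]"
    using assms(2) by (simp add: sorted_list_of_set_insert)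
  then have "LB n {i, j} = lang_concat (Lj n i) (Lj n j)"
    by (simp add: LB_def lang_concat_def)
  moreover have "{i, j} \<in> Pow {1..n}" using assms by simp
  ultimately show ?thesis
    unfolding Lang_def by (metis UN_upper)
qed

lemma separating_words_in_Lang:
  assumes "2 \<le> n" "0 < i"
  shows "replicate j 2 @ replicate i 1 \<in> Lang n"
    and "replicate (Suc j) 1 @ replicate i 2 \<in> Lang n"
proof -
  show "replicate j 2 @ replicate i 1 \<in> Lang n"
    using assms replicate_append_replicate_in_Lj[of 1 2 n i j] Lj_subset_Lang[of 1 n] by auto
  have "replicate (Suc j) 1 \<in> Lj n 1" "replicate i 2 \<in> Lj n 2"
    using assms replicate_in_Lj[of 1 n "Suc j"] replicate_in_Lj[of 2 n i] by auto
  then have "replicate (Suc j) 1 @ replicate i 2 \<in> lang_concat (Lj n 1) (Lj n 2)"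
    unfolding lang_concat_def by blast
  then show "replicate (Suc j) 1 @ replicate i 2 \<in> Lang n"
    using assms lang_concat_Lj_subset_Lang[of 1 2 n] by auto
qed

lemma separating_word_in_Lang_1L_iff:
  assumes "2 \<le> n" "0 < i"
  shows "replicate j (Some 2, Some 1) @ delta_R (replicate i 1) (1 # replicate i 2) \<in> Lang_1L n
    \<longleftrightarrow> i = j"
proof -
  have "replicate j (Some 2, Some 1) @ delta_R (replicate i 1) (1 # replicate i 2)
      = delta_R (replicate j 2 @ replicate i 1) (replicate (Suc j) 1 @ replicate i 2)"
    by (simp add: delta_R_replicate_append flip: replicate_app_Cons_same)
  then show ?thesis
    using separating_words_in_Lang[OF assms] rps_equiv_separating
    by (simp add: delta_R_in_Lang_1L_iff)
qed

theorem proposition6p4: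
  fixes n :: nat
  assumes "n \<ge> 2"
  shows "\<not> regular_over (pair_alphabet n) (Lang_1L n)"
proof
  assume regular: "regular_over (pair_alphabet n) (Lang_1L n)"
  have "replicate j (Some 2, Some 1) \<in> lists (pair_alphabet n)" for j
    using assms by (auto simp: pair_alphabet_def)
  then obtain i j :: nat where "i \<in> {0<..}" "i \<noteq> j"
    and Nerode: "\<And>y. replicate i (Some 2, Some 1) @ y \<in> Lang_1L n
        \<longleftrightarrow> replicate j (Some 2, Some 1) @ y \<in> Lang_1L n"
    by (rule regular_over_Nerode_collision[OF regular infinite_Ioi,
        where x = "\<lambda>j. replicate j (Some 2, Some 1)"]) blast+
  then show False
    using Nerode[of "delta_R (replicate i 1) (1 # replicate i 2)"]
      separating_word_in_Lang_1L_iff[OF assms] by auto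
qed

end
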